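(* Let $\Gamma_C=(\mathcal{S},\mathcal{P},\mathcal{E})$ be a correspondence graph with body graph $\Gamma_B$, and let $\mathbf{x},\mathbf{y}:\mathcal{S}\to\mathbb{R}^d$. The node-patch frameworks $(\Gamma_C,\mathbf{x})$ and $(\Gamma_C,\mathbf{y})$ are equivalent if and only if the frameworks $(\Gamma_B,\mathbf{x})$ and $(\Gamma_B,\mathbf{y})$ are equivalent.
   Context: $\mathcal{S}=\{1,\dots,N\}$, $\mathcal{P}=\{P_1,\dots,P_M\}$ with $P_i\subseteq\mathcal{S}$, and $(k,i)\in\mathcal{E}$ iff $k\in P_i$. The body graph $\Gamma_B$ has vertex set $\mathcal{S}$ and an edge between $k\ne l$ iff $k,l\in P_i$ for some $i$. A rigid transform is $x\mapsto Qx+t$ with $Q$ orthogonal. Node-patch frameworks $(\Gamma_C,\mathbf{x})$, $(\Gamma_C,\mathbf{y})$ are equivalent if there exist rigid transforms $\mathcal{Q}_1,\dots,\mathcal{Q}_M$ with $\mathbf{x}(k)=\mathcal{Q}_i\mathbf{y}(k)$ for all $(k,i)\in\mathcal{E}$. Frameworks $(G,\mathbf{p})$, $(G,\mathbf{q})$ of a graph $G$ are equivalent if $\|\mathbf{p}(u)-\mathbf{p}(v)\|=\|\mathbf{q}(u)-\mathbf{q}(v)\|$ for every edge $(u,v)$ of $G$ (Euclidean norm). *)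

theory Defs
  imports "HOL-Analysis.Analysis"
begin

text \<open>Nodes S = {1..N}, patches P 1, ..., P M (P :: nat => nat set), points in R^d = real^'d.\<close>

definition rigid_transform :: "(real^'d \<Rightarrow> real^'d) \<Rightarrow> bool" where
  "rigid_transform f \<longleftrightarrow> (\<exists>Q t. orthogonal_matrix Q \<and> f = (\<lambda>v. Q *v v + t))"

definition corr_edges :: "nat \<Rightarrow> (nat \<Rightarrow> nat set) \<Rightarrow> (nat \<times> nat) set" where
  "corr_edges M P = {(k, i). i \<in> {1..M} \<and> k \<in> P i}"

definition np_equivalent ::
  "nat \<Rightarrow> (nat \<Rightarrow> nat set) \<Rightarrow> (nat \<Rightarrow> real^'d) \<Rightarrow> (nat \<Rightarrow> real^'d) \<Rightarrow> bool" where
  "np_equivalent M P x y \<longleftrightarrow>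
     (\<exists>T. (\<forall>i\<in>{1..M}. rigid_transform (T i)) \<and>
          (\<forall>(k, i)\<in>corr_edges M P. x k = T i (y k)))"

definition body_edge :: "nat \<Rightarrow> nat \<Rightarrow> (nat \<Rightarrow> nat set) \<Rightarrow> nat \<Rightarrow> nat \<Rightarrow> bool" where
  "body_edge N M P k l \<longleftrightarrow> k \<in> {1..N} \<and> l \<in> {1..N} \<and> k \<noteq> l \<and>
     (\<exists>i\<in>{1..M}. k \<in> P i \<and> l \<in> P i)"

definition framework_equivalent ::
  "(nat \<Rightarrow> nat \<Rightarrow> bool) \<Rightarrow> (nat \<Rightarrow> real^'d) \<Rightarrow> (nat \<Rightarrow> real^'d) \<Rightarrow> bool" where
  "framework_equivalent G p q \<longleftrightarrow> (\<forall>u v. G u v \<longrightarrow> norm (p u - p v) = norm (q u - q v))"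

end

theory Submission
  imports Defs
begin

text \<open>A rigid motion of a patch preserves the distances between its nodes, and any two nodes of a
  patch are joined by a body edge; so equivalence of node-patch frameworks forces equivalence of
  body frameworks. Conversely, two finite point configurations with equal pairwise distances are
  congruent: after translating one point to the origin, the distances determine all inner
  products, and a map preserving them is built one point at a time, each new point being sent to
  its target by the Householder reflection in their difference, which fixes the targets of the
  earlier points.\<close>

definition householder :: "'a::real_inner \<Rightarrow> 'a \<Rightarrow> 'a" where
  "householder u v = v - (2 * (v \<bullet> u) / (u \<bullet> u)) *\<^sub>R u"

text \<open>Since \<open>x / 0 = 0\<close>, \<open>householder 0\<close> is the identity; this spares the
  hypothesis \<open>u \<noteq> 0\<close> below.\<close>

lemma orthogonal_transformation_householder: "orthogonal_transformation (householder u)"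
proof (cases "u = 0")
  case True
  then have "householder u = (\<lambda>v. v)" by (simp add: householder_def fun_eq_iff)
  then show ?thesis by simp
next
  case False
  then have uu: "u \<bullet> u \<noteq> 0" by simp
  have "linear (householder u)"
    by (rule linearI) (simp_all add: householder_def add_divide_distrib algebra_simps)
  moreover have "householder u v \<bullet> householder u w = v \<bullet> w" for v w
    using uu by (simp add: householder_def inner_diff_left inner_diff_right inner_commute
        field_simps power2_eq_square)
  ultimately show ?thesis unfolding orthogonal_transformation_def by blast
qed

lemma householder_fixes_orthogonal: "v \<bullet> u = 0 \<Longrightarrow> householder u v = v"
  by (simp add: householder_def)

lemma householder_swaps:
  assumes "norm p = norm q"
  shows "householder (p - q) p = q"
proof (cases "p = q")
  case False
  have "p \<bullet> p = q \<bullet> q" using assms by (simp add: norm_eq)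
  then have "2 * (p \<bullet> (p - q)) = (p - q) \<bullet> (p - q)"
    by (simp add: inner_diff_left inner_diff_right inner_commute)
  with False show ?thesis by (simp add: householder_def)
qed (simp add: householder_def)

lemma orthogonal_transformation_exists_gram:
  fixes a b :: "'i \<Rightarrow> 'a::real_inner"
  assumes "finite K" and "\<And>k l. k \<in> K \<Longrightarrow> l \<in> K \<Longrightarrow> a k \<bullet> a l = b k \<bullet> b l"
  obtains g where "orthogonal_transformation g" and "\<And>k. k \<in> K \<Longrightarrow> g (a k) = b k"
  using assms
proof (induction K arbitrary: thesis rule: finite_induct)
  case empty
  then show ?case using orthogonal_transformation_id by blast
next
  case (insert j K)
  then obtain g where g: "orthogonal_transformation g" "\<And>k. k \<in> K \<Longrightarrow> g (a k) = b k"
    by (metis insertCI)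
  define h where "h = householder (g (a j) - b j)"
  have g_inner: "g v \<bullet> g w = v \<bullet> w" for v w
    using g(1) unfolding orthogonal_transformation_def by blast
  have "h (b k) = b k" if "k \<in> K" for k
  proof -
    have "g (a j) \<bullet> b k = b j \<bullet> b k"
      using insert.prems(2) g_inner g(2)[OF that] that by (metis insertCI)
    then show ?thesis
      unfolding h_def
      by (intro householder_fixes_orthogonal) (simp add: inner_diff_right inner_commute)
  qed
  moreover have "h (g (a j)) = b j"
    unfolding h_def using insert.prems(2) g_inner by (intro householder_swaps) (simp add: norm_eq)
  moreover have "orthogonal_transformation (h \<circ> g)"
    unfolding h_def by (intro orthogonal_transformation_compose g(1) orthogonal_transformation_householder)
  ultimately show ?case using insert.prems(1) g(2) by (metis comp_apply insertE)
qed

lemma rigid_transform_of_orthogonal_transformation: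
  fixes g :: "real^'d \<Rightarrow> real^'d"
  assumes "orthogonal_transformation g"
  shows "rigid_transform (\<lambda>v. g v + t)"
proof -
  have "linear g" "orthogonal_matrix (matrix g)"
    using assms by (simp_all add: orthogonal_transformation_matrix)
  moreover from \<open>linear g\<close> have "(\<lambda>v. g v + t) = (\<lambda>v. matrix g *v v + t)"
    by (simp add: matrix_vector_mul(2)[symmetric])
  ultimately show ?thesis
    unfolding rigid_transform_def by blast
qed

lemma rigid_transform_norm_diff:
  assumes "rigid_transform f"
  shows "norm (f u - f v) = norm (u - v)"
proof -
  obtain Q t where Q: "orthogonal_matrix Q" and f: "f = (\<lambda>v. Q *v v + t)"
    using assms unfolding rigid_transform_def by blast
  have "norm (Q *v (u - v)) = norm (u - v)"
    using Q by (simp add: orthogonal_transformation_matrix orthogonal_transformation_norm)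
  then show ?thesis by (simp add: f matrix_vector_mult_diff_distrib)
qed

lemma inner_diff_eq_if_norm_diff_eq:
  fixes a b c a' b' c' :: "'a::real_inner"
  assumes "norm (a - c) = norm (a' - c')" and "norm (b - c) = norm (b' - c')"
    and "norm (a - b) = norm (a' - b')"
  shows "(a - c) \<bullet> (b - c) = (a' - c') \<bullet> (b' - c')"
proof -
  have "(a - c) - (b - c) = a - b" "(a' - c') - (b' - c') = a' - b'" by simp_all
  then show ?thesis
    unfolding dot_norm_neg[of "a - c"] dot_norm_neg[of "a' - c'"] using assms by simp
qed

lemma rigid_transform_exists_iff_dist_eq:
  fixes x y :: "'i \<Rightarrow> real^'d"
  assumes "finite K"
  shows "(\<exists>f. rigid_transform f \<and> (\<forall>k\<in>K. x k = f (y k))) \<longleftrightarrow>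
         (\<forall>k\<in>K. \<forall>l\<in>K. norm (x k - x l) = norm (y k - y l))"
proof
  assume "\<exists>f. rigid_transform f \<and> (\<forall>k\<in>K. x k = f (y k))"
  then obtain f where "rigid_transform f" and "\<forall>k\<in>K. x k = f (y k)" by blast
  then show "\<forall>k\<in>K. \<forall>l\<in>K. norm (x k - x l) = norm (y k - y l)"
    by (simp add: rigid_transform_norm_diff)
next
  assume dist_eq: "\<forall>k\<in>K. \<forall>l\<in>K. norm (x k - x l) = norm (y k - y l)"
  show "\<exists>f. rigid_transform f \<and> (\<forall>k\<in>K. x k = f (y k))"
  proof (cases "K = {}")
    case True
    with rigid_transform_of_orthogonal_transformation[OF orthogonal_transformation_id, of 0] show ?thesis by auto
  next
    case False
    then obtain k0 where k0: "k0 \<in> K" by blast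
    have gram: "(y k - y k0) \<bullet> (y l - y k0) = (x k - x k0) \<bullet> (x l - x k0)"
      if "k \<in> K" "l \<in> K" for k l
      using dist_eq k0 that by (intro inner_diff_eq_if_norm_diff_eq[symmetric]) blast+
    obtain g where g: "orthogonal_transformation g"
      and g_diff: "\<And>k. k \<in> K \<Longrightarrow> g (y k - y k0) = x k - x k0"
      using orthogonal_transformation_exists_gram
          [OF assms, of "\<lambda>k. y k - y k0" "\<lambda>k. x k - x k0"] gram
      by auto
    have "x k = g (y k) + (x k0 - g (y k0))" if "k \<in> K" for k
      using g_diff[OF that] linear_diff[OF orthogonal_transformation_linear[OF g]]
      by (simp add: algebra_simps)
    with rigid_transform_of_orthogonal_transformation[OF g, of "x k0 - g (y k0)"] show ?thesis by auto
  qed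
qed

lemma np_equivalent_iff_patchwise:
  "np_equivalent M P x y \<longleftrightarrow> (\<forall>i\<in>{1..M}. \<exists>f. rigid_transform f \<and> (\<forall>k\<in>P i. x k = f (y k)))"
proof
  assume "\<forall>i\<in>{1..M}. \<exists>f. rigid_transform f \<and> (\<forall>k\<in>P i. x k = f (y k))"
  then obtain T where "\<forall>i\<in>{1..M}. rigid_transform (T i) \<and> (\<forall>k\<in>P i. x k = T i (y k))"
    by metis
  then show "np_equivalent M P x y"
    unfolding np_equivalent_def corr_edges_def by auto
qed (auto simp: np_equivalent_def corr_edges_def)

lemma framework_equivalent_body_edge_iff:
  assumes "\<forall>i\<in>{1..M}. P i \<subseteq> {1..N}"
  shows "framework_equivalent (body_edge N M P) x y \<longleftrightarrow>
         (\<forall>i\<in>{1..M}. \<forall>k\<in>P i. \<forall>l\<in>P i. norm (x k - x l) = norm (y k - y l))"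
proof
  assume equiv: "framework_equivalent (body_edge N M P) x y"
  show "\<forall>i\<in>{1..M}. \<forall>k\<in>P i. \<forall>l\<in>P i. norm (x k - x l) = norm (y k - y l)"
  proof (intro ballI)
    fix i k l
    assume "i \<in> {1..M}" "k \<in> P i" "l \<in> P i"
    then have "k = l \<or> body_edge N M P k l"
      using assms unfolding body_edge_def by blast
    then show "norm (x k - x l) = norm (y k - y l)"
      using equiv unfolding framework_equivalent_def by auto
  qed
qed (auto simp: framework_equivalent_def body_edge_def)

theorem proposition6:
  fixes N M :: nat and P :: "nat \<Rightarrow> nat set" and x y :: "nat \<Rightarrow> real^'d"
  assumes "\<forall>i\<in>{1..M}. P i \<subseteq> {1..N}"
  shows "np_equivalent M P x y \<longleftrightarrow> framework_equivalent (body_edge N M P) x y"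
proof -
  have "finite (P i)" if "i \<in> {1..M}" for i
    using assms that finite_subset by blast
  then show ?thesis
    unfolding np_equivalent_iff_patchwise framework_equivalent_body_edge_iff[OF assms]
    by (simp add: rigid_transform_exists_iff_dist_eq)
qed

end
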